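(* Let $\lambda_{\max}>1$ and let $F:[0,\lambda_{\max}]\to\mathbb{R}_+$ be continuously differentiable with $F(0)=0$, such that $F(x)<F^\star$ for all $x\in[0,1)$, $F'(1)>0$, and $F$ is not concave-like. For $U\ge0$ define the dual function $$q(U)=\inf_{\alpha}\big\{\mathbb{E}_\alpha[-F(X)+UX]-U\big\},$$ the infimum over probability measures $\alpha$ on $[0,\lambda_{\max}]$ (with $X\sim\alpha$). Let $U^\star$ be an optimal solution of $\max_{U\ge0}q(U)$. Then $q(U^\star)=\max_{U\ge0}q(U)=-F^\star$, and there exists $L>0$ such that $$q(U^\star)\ge q(U)+L|U^\star-U|\quad\text{for all }U\ge0.$$
   Context: $F^\star=\sup\{\mathbb{E}_\alpha[F(X)]:\alpha$ a probability measure on $[0,\lambda_{\max}]$, $X\sim\alpha$, $\mathbb{E}_\alpha[X]\le1\}$. $F$ is concave-like if for all $x_1,x_2\in[0,\lambda_{\max}]\setminus\{1\}$, $p\in(0,1)$ with $px_1+(1-p)x_2=1$, we have $F(1)>pF(x_1)+(1-p)F(x_2)$. *)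

theory Defs
  imports "HOL-Probability.Probability"
begin

definition prob_on :: "real \<Rightarrow> real measure \<Rightarrow> bool" where
  "prob_on lmax M \<longleftrightarrow> prob_space M \<and> sets M = sets (restrict_space borel {0..lmax})"

definition Fstar :: "(real \<Rightarrow> real) \<Rightarrow> real \<Rightarrow> real" where
  "Fstar F lmax = Sup {(\<integral>x. F x \<partial>M) | M. prob_on lmax M \<and> (\<integral>x. x \<partial>M) \<le> 1}"

definition concave_like :: "(real \<Rightarrow> real) \<Rightarrow> real \<Rightarrow> bool" where
  "concave_like F lmax \<longleftrightarrow>
     (\<forall>x1 \<in> {0..lmax} - {1}. \<forall>x2 \<in> {0..lmax} - {1}. \<forall>p \<in> {0<..<1}.
        p * x1 + (1 - p) * x2 = 1 \<longrightarrow> F 1 > p * F x1 + (1 - p) * F x2)"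

definition dualq :: "(real \<Rightarrow> real) \<Rightarrow> real \<Rightarrow> real \<Rightarrow> real" where
  "dualq F lmax U = Inf {(\<integral>x. (- F x + U * x) \<partial>M) - U | M. prob_on lmax M}"

end

(* For fixed U the integrand of q(U) is the Lagrangian -F(x) + U(x - 1), so q(U) is its
   minimum over x in [0, lmax], attained by a point mass: q is a minimum of affine functions
   of U with slopes x - 1.  Since Ustar maximises q on [0, oo), perturbing Ustar to Ustar + e
   (and to Ustar - e if Ustar > 0) shows that the minimum at Ustar is attained at some a <= 1
   (and at some b >= 1); if the contact point is 1 itself, non-concave-likeness yields contact
   points strictly on both sides of 1.  A mixture of point masses at a and b with mean 1 (a
   point mass at a if Ustar = 0) then meets the complementary slackness conditions, so it
   attains -q(Ustar) in the primal problem, while the slopes a - 1 < 0 < b - 1 make q decay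
   linearly away from Ustar. *)
theory Submission imports Defs begin

lemma space_prob_on: "prob_on lmax M \<Longrightarrow> space M = {0..lmax}"
  unfolding prob_on_def by (metis sets_eq_imp_space_eq space_borel space_restrict_space inf_top_right)

lemma borel_measurable_prob_on:
  assumes "prob_on lmax M" "continuous_on {0..lmax} f"
  shows "f \<in> borel_measurable M"
  using assms unfolding prob_on_def
  by (metis borel_measurable_continuous_on_restrict measurable_cong_sets)

lemma integrable_prob_on:
  fixes f :: "real \<Rightarrow> real"
  assumes M: "prob_on lmax M" and f: "continuous_on {0..lmax} f"
  shows "integrable M f"
proof -
  have "compact (f ` {0..lmax})" by (intro compact_continuous_image f) auto
  then obtain B where "\<forall>y\<in>f ` {0..lmax}. norm y \<le> B"
    using compact_imp_bounded bounded_iff by metis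
  moreover have "finite_measure M"
    using M unfolding prob_on_def by (auto intro: prob_space.finite_measure)
  ultimately show ?thesis
    using space_prob_on[OF M] borel_measurable_prob_on[OF M f]
    by (intro finite_measure.integrable_const_bound[where B = B]) (auto intro!: AE_I2)
qed

lemma integral_ge_const_prob_on:
  fixes f :: "real \<Rightarrow> real"
  assumes "prob_on lmax M" "continuous_on {0..lmax} f" "\<forall>x\<in>{0..lmax}. c \<le> f x"
  shows "c \<le> (\<integral>x. f x \<partial>M)"
  using assms integrable_prob_on[OF assms(1,2)] space_prob_on[OF assms(1)] unfolding prob_on_def
  by (intro prob_space.integral_ge_const) (auto intro!: AE_I2)

definition two_point :: "real \<Rightarrow> real \<Rightarrow> real \<Rightarrow> real \<Rightarrow> real measure" where
  "two_point lmax p x1 x2 =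
     distr (measure_pmf (bernoulli_pmf p)) (restrict_space borel {0..lmax}) (\<lambda>b. if b then x1 else x2)"

lemma prob_on_two_point:
  assumes "x1 \<in> {0..lmax}" "x2 \<in> {0..lmax}"
  shows "prob_on lmax (two_point lmax p x1 x2)"
  unfolding prob_on_def two_point_def using assms
  by (auto intro!: prob_space.prob_space_distr prob_space_measure_pmf)

lemma integral_two_point:
  fixes f :: "real \<Rightarrow> real"
  assumes "x1 \<in> {0..lmax}" "x2 \<in> {0..lmax}" "continuous_on {0..lmax} f" "0 \<le> p" "p \<le> 1"
  shows "(\<integral>y. f y \<partial>two_point lmax p x1 x2) = p * f x1 + (1 - p) * f x2"
  unfolding two_point_def using assms
  by (subst integral_distr) (auto intro!: borel_measurable_continuous_on_restrict)

definition lagrangian :: "(real \<Rightarrow> real) \<Rightarrow> real \<Rightarrow> real \<Rightarrow> real" where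
  "lagrangian F U x = - F x + U * (x - 1)"

lemma continuous_on_lagrangian:
  "continuous_on S F \<Longrightarrow> continuous_on S (lagrangian F U)"
  unfolding lagrangian_def by (intro continuous_intros)

lemma dualq_eq_min_lagrangian:
  assumes F: "continuous_on {0..lmax} F" and "0 \<le> lmax"
  obtains x where "x \<in> {0..lmax}" "dualq F lmax U = lagrangian F U x"
    "\<forall>y\<in>{0..lmax}. dualq F lmax U \<le> lagrangian F U y"
proof -
  have cont: "continuous_on {0..lmax} (\<lambda>x. - F x + U * x)"
    by (intro continuous_intros F)
  obtain x where x: "x \<in> {0..lmax}" "\<forall>y\<in>{0..lmax}. lagrangian F U x \<le> lagrangian F U y"
    using continuous_attains_inf[OF _ _ continuous_on_lagrangian[OF F]] \<open>0 \<le> lmax\<close> by fastforce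
  have "dualq F lmax U = lagrangian F U x"
    unfolding dualq_def
  proof (rule cInf_eq_minimum)
    show "lagrangian F U x \<in> {(\<integral>x. (- F x + U * x) \<partial>M) - U | M. prob_on lmax M}"
    proof (intro CollectI exI conjI)
      show "prob_on lmax (two_point lmax 1 x x)" using prob_on_two_point[OF x(1) x(1)] .
      show "lagrangian F U x = (\<integral>x. (- F x + U * x) \<partial>two_point lmax 1 x x) - U"
        using integral_two_point[OF x(1) x(1) cont, of 1] by (simp add: lagrangian_def algebra_simps)
    qed
  next
    fix z assume "z \<in> {(\<integral>x. (- F x + U * x) \<partial>M) - U | M. prob_on lmax M}"
    then obtain M where M: "prob_on lmax M" "z = (\<integral>x. (- F x + U * x) \<partial>M) - U" by auto
    have "lagrangian F U x + U \<le> (\<integral>x. (- F x + U * x) \<partial>M)"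
      using x by (intro integral_ge_const_prob_on[OF M(1) cont]) (force simp: lagrangian_def algebra_simps)
    then show "lagrangian F U x \<le> z" using M by simp
  qed
  then show ?thesis using that x by auto
qed

lemma dualq_le_lagrangian:
  assumes "continuous_on {0..lmax} F" "y \<in> {0..lmax}"
  shows "dualq F lmax U \<le> lagrangian F U y"
  using assms by (metis dualq_eq_min_lagrangian atLeastAtMost_iff order.trans)

lemma dualq_le_via_minimizer:
  assumes "continuous_on {0..lmax} F" "a \<in> {0..lmax}" "lagrangian F u a = dualq F lmax u"
  shows "dualq F lmax U \<le> dualq F lmax u + (U - u) * (a - 1)"
  using dualq_le_lagrangian[OF assms(1,2), of U] assms(3)
  by (simp add: lagrangian_def algebra_simps)

lemma min_point_le_pivot:
  fixes h :: "real \<Rightarrow> real"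
  assumes h: "continuous_on {lo..hi} h" and "lo \<le> t" "t \<le> hi"
    and ge: "\<forall>x\<in>{lo..hi}. c \<le> h x"
    and "0 < \<delta>"
    and perturbed: "\<And>e. 0 < e \<Longrightarrow> e \<le> \<delta> \<Longrightarrow> \<exists>x\<in>{lo..hi}. h x + e * (x - t) \<le> c"
  shows "\<exists>x\<in>{lo..hi}. x \<le> t \<and> h x = c"
proof (rule ccontr)
  assume none: "\<not> ?thesis"
  obtain z where z: "z \<in> {lo..t}" "\<forall>y\<in>{lo..t}. h z \<le> h y"
  proof (rule continuous_attains_inf[THEN bexE])
    show "continuous_on {lo..t} h" by (rule continuous_on_subset[OF h]) (use \<open>t \<le> hi\<close> in auto)
  qed (use \<open>lo \<le> t\<close> in auto)
  have gap: "c < h z"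
    using none z ge \<open>t \<le> hi\<close> by (force simp: order_less_le)
  define e where "e = min \<delta> ((h z - c) / (t - lo + 1))"
  have "0 < e" "e \<le> \<delta>" using gap \<open>0 < \<delta>\<close> \<open>lo \<le> t\<close> by (auto simp: e_def)
  have "e \<le> (h z - c) / (t - lo + 1)" by (simp add: e_def)
  then have "e * (t - lo + 1) \<le> h z - c" using \<open>lo \<le> t\<close> by (simp add: pos_le_divide_eq)
  then have small: "e * (t - lo) < h z - c" using \<open>0 < e\<close> by (simp add: algebra_simps)
  obtain x where x: "x \<in> {lo..hi}" "h x + e * (x - t) \<le> c"
    using perturbed[OF \<open>0 < e\<close> \<open>e \<le> \<delta>\<close>] by blast
  show False
  proof (cases "x \<le> t")
    case True
    have "e * (t - x) \<le> e * (t - lo)" using x \<open>0 < e\<close> by (intro mult_left_mono) auto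
    moreover have "h z \<le> h x" using z True x by auto
    ultimately show False using x small by (simp add: algebra_simps)
  next
    case False
    then have "0 < e * (x - t)" using \<open>0 < e\<close> by simp
    then show False using x ge by fastforce
  qed
qed

lemma min_point_ge_pivot:
  fixes h :: "real \<Rightarrow> real"
  assumes h: "continuous_on {lo..hi} h" and "lo \<le> t" "t \<le> hi"
    and ge: "\<forall>x\<in>{lo..hi}. c \<le> h x"
    and "0 < \<delta>"
    and perturbed: "\<And>e. 0 < e \<Longrightarrow> e \<le> \<delta> \<Longrightarrow> \<exists>x\<in>{lo..hi}. h x - e * (x - t) \<le> c"
  shows "\<exists>x\<in>{lo..hi}. t \<le> x \<and> h x = c"
proof -
  have "\<exists>y\<in>{-hi..-lo}. y \<le> -t \<and> h (- y) = c"
  proof (rule min_point_le_pivot[where \<delta> = \<delta>])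
    show "continuous_on {-hi..-lo} (\<lambda>y. h (- y))"
      by (intro continuous_on_compose2[OF h] continuous_intros) auto
    show "\<exists>y\<in>{-hi..-lo}. h (- y) + e * (y - - t) \<le> c" if e: "0 < e" "e \<le> \<delta>" for e
    proof -
      obtain x where "x \<in> {lo..hi}" "h x - e * (x - t) \<le> c" using perturbed[OF e] by blast
      then show ?thesis by (intro bexI[of _ "- x"]) (auto simp: algebra_simps)
    qed
  qed (use assms in auto)
  then obtain y where "y \<in> {-hi..-lo}" "y \<le> -t" "h (- y) = c" by blast
  then show ?thesis by (intro bexI[of _ "- y"]) auto
qed

lemma not_concave_like_support_line_contacts:
  assumes "\<not> concave_like F lmax" and below_line: "\<forall>x\<in>{0..lmax}. F x \<le> F 1 + s * (x - 1)"
  obtains a b where "a \<in> {0..lmax}" "a < 1" "F a = F 1 + s * (a - 1)"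
    "b \<in> {0..lmax}" "1 < b" "F b = F 1 + s * (b - 1)"
proof -
  have "\<exists>x1\<in>{0..lmax} - {1}. \<exists>x2\<in>{0..lmax} - {1}. \<exists>p\<in>{0<..<1}.
      p * x1 + (1 - p) * x2 = 1 \<and> F 1 \<le> p * F x1 + (1 - p) * F x2"
    using assms(1) unfolding concave_like_def by (simp only: Set.ball_simps not_imp not_less)
  then obtain x1 x2 p where x: "x1 \<in> {0..lmax} - {1}" "x2 \<in> {0..lmax} - {1}"
    and p: "p \<in> {0<..<1}" and mean: "p * x1 + (1 - p) * x2 = 1"
    and le: "F 1 \<le> p * F x1 + (1 - p) * F x2"
    by blast
  define line where "line x = F 1 + s * (x - 1)" for x
  have "p * (line x1 - F x1) + (1 - p) * (line x2 - F x2)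
      = F 1 + s * (p * x1 + (1 - p) * x2 - 1) - (p * F x1 + (1 - p) * F x2)"
    unfolding line_def by (simp add: algebra_simps)
  then have "p * (line x1 - F x1) + (1 - p) * (line x2 - F x2) \<le> 0"
    using le mean by simp
  moreover have "0 \<le> p * (line x1 - F x1)" "0 \<le> (1 - p) * (line x2 - F x2)"
    using below_line x p unfolding line_def by simp_all
  ultimately have "p * (line x1 - F x1) = 0" "(1 - p) * (line x2 - F x2) = 0"
    by linarith+
  then have touch: "F x1 = line x1" "F x2 = line x2" using p by simp_all
  have "p * (x1 - 1) = (1 - p) * (1 - x2)" using mean by (simp add: algebra_simps)
  moreover have "x1 < 1 \<longleftrightarrow> p * (x1 - 1) < 0" "1 < x2 \<longleftrightarrow> (1 - p) * (1 - x2) < 0"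
    using p by (auto simp: mult_less_0_iff)
  ultimately have sides: "x1 < 1 \<longleftrightarrow> 1 < x2" by simp
  show ?thesis
  proof (cases "x1 < 1")
    case True
    then show ?thesis using that[of x1 x2] x touch sides unfolding line_def by simp
  next
    case False
    then show ?thesis using that[of x2 x1] x touch sides unfolding line_def by auto
  qed
qed

lemma not_concave_like_lagrangian_contacts:
  assumes "\<not> concave_like F lmax" and ge: "\<forall>x\<in>{0..lmax}. c \<le> lagrangian F U x"
    and one: "lagrangian F U 1 = c"
  shows "\<exists>a\<in>{0..lmax}. a < 1 \<and> lagrangian F U a = c"
    and "\<exists>b\<in>{0..lmax}. 1 < b \<and> lagrangian F U b = c"
proof -
  have "\<forall>x\<in>{0..lmax}. F x \<le> F 1 + U * (x - 1)"
    using ge one unfolding lagrangian_def by force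
  then obtain a b where "a \<in> {0..lmax}" "a < 1" "F a = F 1 + U * (a - 1)"
    "b \<in> {0..lmax}" "1 < b" "F b = F 1 + U * (b - 1)"
    using not_concave_like_support_line_contacts[OF assms(1)] by blast
  with one show "\<exists>a\<in>{0..lmax}. a < 1 \<and> lagrangian F U a = c"
    and "\<exists>b\<in>{0..lmax}. 1 < b \<and> lagrangian F U b = c"
    unfolding lagrangian_def by auto
qed

lemma dualq_optimal_minimizers:
  assumes F: "continuous_on {0..lmax} F" and "1 \<le> lmax" and notcl: "\<not> concave_like F lmax"
    and "0 \<le> Ustar"
    and opt: "\<forall>U \<ge> 0. dualq F lmax U \<le> dualq F lmax Ustar"
  shows "\<exists>a\<in>{0..lmax}. a < 1 \<and> lagrangian F Ustar a = dualq F lmax Ustar"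
    and "0 < Ustar \<Longrightarrow> \<exists>b\<in>{0..lmax}. 1 < b \<and> lagrangian F Ustar b = dualq F lmax Ustar"
proof -
  define c where "c = dualq F lmax Ustar"
  define h where "h = lagrangian F Ustar"
  have "0 \<le> lmax" using \<open>1 \<le> lmax\<close> by simp
  have h: "continuous_on {0..lmax} h" unfolding h_def by (rule continuous_on_lagrangian[OF F])
  have ge: "\<forall>x\<in>{0..lmax}. c \<le> h x" unfolding c_def h_def using dualq_le_lagrangian[OF F] by blast
  have perturbed: "\<exists>x\<in>{0..lmax}. h x + d * (x - 1) \<le> c" if "0 \<le> Ustar + d" for d
  proof -
    obtain x where "x \<in> {0..lmax}" "dualq F lmax (Ustar + d) = lagrangian F (Ustar + d) x"
      using dualq_eq_min_lagrangian[OF F \<open>0 \<le> lmax\<close>] by blast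
    moreover have "lagrangian F (Ustar + d) x = h x + d * (x - 1)"
      unfolding h_def lagrangian_def by (simp add: algebra_simps)
    ultimately show ?thesis using opt that unfolding c_def by fastforce
  qed
  have "\<exists>a\<in>{0..lmax}. a \<le> 1 \<and> h a = c"
    using \<open>0 \<le> Ustar\<close>
    by (intro min_point_le_pivot[OF h _ \<open>1 \<le> lmax\<close> ge zero_less_one] perturbed) auto
  then show "\<exists>a\<in>{0..lmax}. a < 1 \<and> lagrangian F Ustar a = dualq F lmax Ustar"
    using not_concave_like_lagrangian_contacts(1)[OF notcl] ge
    unfolding h_def c_def by (force simp: order_less_le)
  show "\<exists>b\<in>{0..lmax}. 1 < b \<and> lagrangian F Ustar b = dualq F lmax Ustar" if "0 < Ustar"
  proof -
    have "\<exists>b\<in>{0..lmax}. 1 \<le> b \<and> h b = c"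
    proof (rule min_point_ge_pivot[OF h _ \<open>1 \<le> lmax\<close> ge \<open>0 < Ustar\<close>])
      show "\<exists>x\<in>{0..lmax}. h x - e * (x - 1) \<le> c" if "0 < e" "e \<le> Ustar" for e
        using perturbed[of "- e"] that by simp
    qed simp
    then show ?thesis
      using not_concave_like_lagrangian_contacts(2)[OF notcl] ge
      unfolding h_def c_def by (force simp: order_less_le)
  qed
qed

lemma integral_le_neg_dualq:
  assumes F: "continuous_on {0..lmax} F" and "0 \<le> U"
    and M: "prob_on lmax M" "(\<integral>x. x \<partial>M) \<le> 1"
  shows "(\<integral>x. F x \<partial>M) \<le> - dualq F lmax U"
proof -
  have id: "continuous_on {0..lmax} (\<lambda>x::real. x)" by (rule continuous_on_id)
  have "dualq F lmax U + U \<le> - F x + U * x" if "x \<in> {0..lmax}" for x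
    using dualq_le_lagrangian[OF F that, of U] by (simp add: lagrangian_def algebra_simps)
  then have "dualq F lmax U + U \<le> (\<integral>x. - F x + U * x \<partial>M)"
    by (intro integral_ge_const_prob_on[OF M(1)] continuous_intros F) blast
  also have "\<dots> = - (\<integral>x. F x \<partial>M) + U * (\<integral>x. x \<partial>M)"
    using integrable_prob_on[OF M(1) F] integrable_prob_on[OF M(1) id] by simp
  also have "\<dots> \<le> - (\<integral>x. F x \<partial>M) + U"
    using M(2) \<open>0 \<le> U\<close> by (simp add: mult_left_le)
  finally show ?thesis by simp
qed

lemma Fstar_eqI:
  assumes "prob_on lmax M" "(\<integral>x. x \<partial>M) \<le> 1" "(\<integral>x. F x \<partial>M) = v"
    and "\<And>M. prob_on lmax M \<Longrightarrow> (\<integral>x. x \<partial>M) \<le> 1 \<Longrightarrow> (\<integral>x. F x \<partial>M) \<le> v"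
  shows "Fstar F lmax = v"
  unfolding Fstar_def by (rule cSup_eq_maximum) (use assms in auto)

lemma Fstar_eq_neg_dualq:
  assumes F: "continuous_on {0..lmax} F" and "0 \<le> U"
    and a: "a \<in> {0..lmax}" "lagrangian F U a = dualq F lmax U"
    and b: "b \<in> {0..lmax}" "lagrangian F U b = dualq F lmax U"
    and p: "0 \<le> p" "p \<le> 1"
    and mean: "p * a + (1 - p) * b \<le> 1"
    and slack: "U * (p * a + (1 - p) * b - 1) = 0"
  shows "Fstar F lmax = - dualq F lmax U"
proof (rule Fstar_eqI)
  let ?M = "two_point lmax p a b"
  show "prob_on lmax ?M" using prob_on_two_point[OF a(1) b(1)] .
  show "(\<integral>x. x \<partial>?M) \<le> 1"
    using integral_two_point[OF a(1) b(1) continuous_on_id p] mean by simp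
  have "(\<integral>x. F x \<partial>?M) = p * F a + (1 - p) * F b"
    using integral_two_point[OF a(1) b(1) F p] .
  also have "\<dots> = U * (p * a + (1 - p) * b - 1) - dualq F lmax U"
  proof -
    have Fa: "F a = U * (a - 1) - dualq F lmax U" and Fb: "F b = U * (b - 1) - dualq F lmax U"
      using a(2) b(2) unfolding lagrangian_def by simp_all
    show ?thesis unfolding Fa Fb by (simp add: algebra_simps)
  qed
  finally show "(\<integral>x. F x \<partial>?M) = - dualq F lmax U" using slack by simp
qed (rule integral_le_neg_dualq[OF F \<open>0 \<le> U\<close>])

lemma linear_decay_of_opposite_supergradients:
  fixes q :: "real \<Rightarrow> real"
  assumes neg: "q U \<le> q u + (U - u) * g" and pos: "q U \<le> q u + (U - u) * g'"
    and "g \<le> 0" "0 \<le> g'"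
  shows "q U + min (- g) g' * \<bar>u - U\<bar> \<le> q u"
proof (cases "u \<le> U")
  case True
  then have "min (- g) g' * (U - u) \<le> - g * (U - u)" by (intro mult_right_mono) auto
  with neg True show ?thesis by (simp add: algebra_simps)
next
  case False
  then have "min (- g) g' * (u - U) \<le> g' * (u - U)" by (intro mult_right_mono) auto
  with pos False show ?thesis by (simp add: algebra_simps)
qed

theorem theorem5p5:
  fixes F F' :: "real \<Rightarrow> real" and lmax Ustar :: real
  assumes lmax: "lmax > 1"
    and nonneg: "\<forall>x \<in> {0..lmax}. F x \<ge> 0"
    and deriv: "\<forall>x \<in> {0..lmax}. (F has_real_derivative F' x) (at x within {0..lmax})"
    and cont_deriv: "continuous_on {0..lmax} F'"
    and F0: "F 0 = 0"
    and below: "\<forall>x \<in> {0..<1}. F x < Fstar F lmax"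
    and dpos: "F' 1 > 0"
    and notcl: "\<not> concave_like F lmax"
    and Ustar_nonneg: "Ustar \<ge> 0"
    and Ustar_opt: "\<forall>U \<ge> 0. dualq F lmax U \<le> dualq F lmax Ustar"
  shows "dualq F lmax Ustar = - Fstar F lmax \<and>
         (\<exists>L > 0. \<forall>U \<ge> 0. dualq F lmax Ustar \<ge> dualq F lmax U + L * \<bar>Ustar - U\<bar>)"
proof -
  \<comment> \<open>Once an optimal Ustar is given, deriv only serves to make F continuous.\<close>
  let ?q = "dualq F lmax"
  have F: "continuous_on {0..lmax} F"
    by (rule DERIV_continuous_on) (use deriv in auto)
  obtain a where a: "a \<in> {0..lmax}" "a < 1" "lagrangian F Ustar a = ?q Ustar"
    using dualq_optimal_minimizers(1)[OF F _ notcl Ustar_nonneg Ustar_opt] lmax by auto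
  note slope_a = dualq_le_via_minimizer[OF F a(1,3)]
  show ?thesis
  proof (cases "Ustar = 0")
    case True
    then have "Fstar F lmax = - ?q Ustar"
      using Fstar_eq_neg_dualq[OF F Ustar_nonneg a(1,3) a(1,3), of 1] a by simp
    moreover have "?q U + (1 - a) * \<bar>Ustar - U\<bar> \<le> ?q Ustar" if "0 \<le> U" for U
      using slope_a[of U] that True by (simp add: algebra_simps)
    ultimately show ?thesis using a(2) by (auto intro!: exI[of _ "1 - a"])
  next
    case False
    then obtain b where b: "b \<in> {0..lmax}" "1 < b" "lagrangian F Ustar b = ?q Ustar"
      using dualq_optimal_minimizers(2)[OF F _ notcl Ustar_nonneg Ustar_opt] lmax Ustar_nonneg by auto
    have "1 \<in> closed_segment b a" using a b by (simp add: closed_segment_eq_real_ivl)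
    then obtain p where "0 \<le> p" "p \<le> 1" "p * a + (1 - p) * b = 1"
      by (auto simp: in_segment algebra_simps)
    then have "Fstar F lmax = - ?q Ustar"
      using Fstar_eq_neg_dualq[OF F Ustar_nonneg a(1,3) b(1,3)] by simp
    moreover have "?q U + min (1 - a) (b - 1) * \<bar>Ustar - U\<bar> \<le> ?q Ustar" for U
      using linear_decay_of_opposite_supergradients[where q = ?q,
          OF slope_a[of U] dualq_le_via_minimizer[OF F b(1,3), of U]] a b
      by simp
    ultimately show ?thesis using a b by (auto intro!: exI[of _ "min (1 - a) (b - 1)"])
  qed
qed

end
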